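(* Let $a>0$, $\tau>0$ with $\tau\le a$. Then $\Sigma:=\{\lambda\in\mathbb{C}:\ a\lambda+e^{-\lambda\tau}=0\}\subset\{\lambda\in\mathbb{C}:\ \Re\lambda<0\}$. *)

theory Defs
  imports "HOL-Analysis.Analysis"
begin

end

theory Submission
  imports Defs
begin

text \<open>If a root \<open>z\<close> had \<open>Re z \<ge> 0\<close>, taking moduli would give \<open>a |z| = exp (- \<tau> Re z) \<le> 1\<close>,
  hence \<open>\<tau> |Im z| \<le> a |Im z| \<le> 1 < pi/2\<close>. Then \<open>exp (- z \<tau>)\<close> has positive real part,
  while \<open>Re (a z) \<ge> 0\<close>, so the two terms cannot cancel.\<close>

lemma Re_exp_pos:
  assumes "\<bar>Im w\<bar> < pi / 2"
  shows "Re (exp w) > 0"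
proof -
  have "cos (Im w) > 0"
    using assms by (intro cos_gt_zero_pi) auto
  then show ?thesis
    by (simp add: Re_exp)
qed

lemma norm_root_eq:
  fixes a \<tau> :: real
  assumes "a > 0" and "complex_of_real a * z + exp (- z * complex_of_real \<tau>) = 0"
  shows "a * cmod z = exp (- Re z * \<tau>)"
proof -
  have "complex_of_real a * z = - exp (- z * complex_of_real \<tau>)"
    using assms(2) by (simp add: add_eq_0_iff)
  from arg_cong[OF this, of norm] show ?thesis
    using assms(1) by (simp add: norm_mult norm_exp_eq_Re)
qed

lemma abs_Im_mult_le_one:
  fixes a \<tau> :: real
  assumes "a > 0" "\<tau> \<le> a" "a * cmod z \<le> 1"
  shows "\<bar>Im z\<bar> * \<tau> \<le> 1"
proof -
  have "\<bar>Im z\<bar> * \<tau> \<le> \<bar>Im z\<bar> * a"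
    using assms(2) by (simp add: mult_left_mono)
  also have "\<dots> \<le> cmod z * a"
    using assms(1) by (simp add: abs_Im_le_cmod mult_right_mono)
  finally show ?thesis
    using assms(3) by (simp add: mult.commute)
qed

theorem lemma3p4:
  fixes a \<tau> :: real
  assumes "a > 0" and "\<tau> > 0" and "\<tau> \<le> a"
  shows "{z::complex. complex_of_real a * z + exp (- z * complex_of_real \<tau>) = 0}
           \<subseteq> {z. Re z < 0}"
proof
  fix z :: complex
  assume "z \<in> {z. complex_of_real a * z + exp (- z * complex_of_real \<tau>) = 0}"
  then have root: "complex_of_real a * z + exp (- z * complex_of_real \<tau>) = 0"
    by simp
  show "z \<in> {z. Re z < 0}"
  proof (rule ccontr)
    assume "z \<notin> {z. Re z < 0}"
    then have Re_nonneg: "Re z \<ge> 0"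
      by simp
    have "a * cmod z \<le> 1"
      using norm_root_eq[OF assms(1) root] Re_nonneg assms(2) by simp
    then have "\<bar>Im z\<bar> * \<tau> \<le> 1"
      using abs_Im_mult_le_one assms(1,3) by blast
    then have "\<bar>Im (- z * complex_of_real \<tau>)\<bar> < pi / 2"
      using pi_gt3 assms(2) by (simp add: abs_mult)
    then have "Re (exp (- z * complex_of_real \<tau>)) > 0"
      by (rule Re_exp_pos)
    moreover have "Re (complex_of_real a * z) \<ge> 0"
      using Re_nonneg assms(1) by simp
    ultimately show False
      using arg_cong[OF root, of Re] by simp
  qed
qed

end
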